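(* Assume $q>2$. For every integer $d\ge1$, $$\operatorname{BG}_{q^d-2}=-\sum_{d\ge i>j\ge0}\frac{b_i(\theta^{q^d})}{l_i\,l_j}.$$
   Context: $A=\mathbb{F}_q[\theta]$, $A^+(k)$ the monic polynomials of degree $k$. For an integer $n\ge0$, $\operatorname{BG}_n=\sum_{k\ge0}\sum_{a\in A^+(k)}a^{n}\in A$ (the inner sums vanish for all sufficiently large $k$, so this is a finite sum). $l_0=1$, $l_i=(\theta-\theta^{q^i})l_{i-1}$ for $i\ge1$; $b_0(Y)=1$, $b_i(Y)=\prod_{k=0}^{i-1}(Y-\theta^{q^k})$ for $i\ge1$, evaluated at $Y=\theta^{q^d}$. *)

theory Defs
  imports "HOL-Library.Cardinality" "HOL-Computational_Algebra.Polynomial" "HOL-Computational_Algebra.Fraction_Field"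
begin

text \<open>A = F_q[theta] is rendered as 'a poly for a finite field 'a with q = CARD('a::{finite,field});
  theta is the indeterminate [:0,1:].\<close>

definition theta :: "'a::field poly" where
  "theta = [:0, 1:]"

definition Spow :: "nat \<Rightarrow> nat \<Rightarrow> 'a::{finite,field} poly" where
  "Spow k n = (\<Sum>a\<in>{a :: 'a poly. lead_coeff a = 1 \<and> degree a = k}. a ^ n)"

text \<open>BG_n = sum over all k of Spow k n; only finitely many terms are nonzero,
  so we sum over the (finite) set of k with nonzero term.\<close>
definition BG :: "nat \<Rightarrow> 'a::{finite,field} poly" where
  "BG n = (\<Sum>k\<in>{k. Spow k n \<noteq> (0 :: 'a poly)}. Spow k n)"

definition lcar :: "nat \<Rightarrow> 'a::{finite,field} poly" where
  "lcar i = (\<Prod>k\<in>{1..i}. theta - theta ^ (CARD('a::{finite,field}) ^ k))"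

text \<open>b_i(Y) evaluated at Y = theta^(q^d).\<close>
definition bcar :: "nat \<Rightarrow> nat \<Rightarrow> 'a::{finite,field} poly" where
  "bcar d i = (\<Prod>k<i. theta ^ (CARD('a::{finite,field}) ^ d) - theta ^ (CARD('a::{finite,field}) ^ k))"

end

theory Submission
  imports Defs
begin

text \<open>
  The monic polynomials of degree k are the translates \<theta>^k + V_k of the F_q-space V_k of
  polynomials of degree < k. For a finite additive group V the derivative of
  e_V(X) = \<Prod>_{v \<in> V} (X - v) is constant, which forces \<Sum>_{v \<in> V} (x + v)^m = 0 for m \<le> |V| - 2.
  Since a^(q^j) = a(\<theta>^(q^j)), for weights w_a = a^(-r) the polynomial \<Sum>_a w_a a(X) of degree k
  therefore vanishes at k of the points \<theta>^(q^j), so it is (\<Sum>_a w_a) times the corresponding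
  linear factors. With r = 1, together with recursions for \<Prod>_a a and \<Prod>_{w \<noteq> 0} (-w), this
  gives Carlitz's \<Sum>_a 1/a = 1/l_k; with r = 2, evaluating at X = \<theta> and at X = \<theta>^(q^d) gives
  \<Sum>_a a^(q^d - 2) = \<Prod>_{1 \<le> j \<le> k} (\<theta>^(q^d) - \<theta>^(q^j)) / l_k^2, which vanishes for k \<ge> d.
  Summing over k < d and telescoping yields the formula.
\<close>

lemma sum_eq_single:
  assumes "finite A" "m \<in> A" "\<And>i. i \<in> A \<Longrightarrow> i \<noteq> m \<Longrightarrow> f i = 0"
  shows "sum f A = f m"
  using sum.mono_neutral_right[of A "{m}" f] assms by auto

lemma degree_pderiv_le: "degree (pderiv p) \<le> degree p - 1"
  by (rule degree_le) (auto simp: coeff_pderiv coeff_eq_0)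

lemma degree_prod_linear_factors: "finite Z \<Longrightarrow> degree (\<Prod>z\<in>Z. [:-z,1::'a::idom:]) = card Z"
  by (subst degree_prod_eq_sum_degree) auto

lemma coeff_prod_linear_factors_card: "finite Z \<Longrightarrow> coeff (\<Prod>z\<in>Z. [:-z,1::'a::idom:]) (card Z) = 1"
  using lead_coeff_prod[of "\<lambda>z. [:-z,1:]" Z] by (simp add: degree_prod_linear_factors)

lemma poly_eq_smult_prod_roots:
  fixes P :: "'a::idom poly"
  assumes "degree P \<le> card Z" "finite Z" "\<And>z. z \<in> Z \<Longrightarrow> poly P z = 0"
  shows "P = smult (coeff P (card Z)) (\<Prod>z\<in>Z. [:-z,1:])"
  using assms degree_prod_linear_factors[OF assms(2)] coeff_prod_linear_factors_card[OF assms(2)]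
  by (intro poly_eqI_degree_lead_coeff[where A = Z])
     (auto simp: poly_prod prod_zero_iff intro: order.trans[OF degree_smult_le])

text \<open>Synthetic division by \<open>X - v\<close>, read off from the top coefficients.\<close>
lemma coeff_eq_sum_coeff_mult_linear:
  fixes g :: "'a::comm_ring_1 poly"
  assumes "f = [:-v,1:] * g" "degree g < j + L"
  shows "coeff g j = (\<Sum>i<L. coeff f (j + 1 + i) * v ^ i)"
  using assms(2)
proof (induction L arbitrary: j)
  case 0
  then show ?case by (simp add: coeff_eq_0)
next
  case (Suc L)
  have "coeff g j = coeff f (Suc j) + v * coeff g (Suc j)"
    by (simp add: assms(1))
  also have "coeff g (Suc j) = (\<Sum>i<L. coeff f (Suc j + 1 + i) * v ^ i)"
    using Suc.prems by (intro Suc.IH) simp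
  finally show ?case
    by (simp add: sum.lessThan_Suc_shift sum_distrib_left mult_ac del: sum.lessThan_Suc)
qed

lemma sum_telescope_nested:
  fixes c g :: "nat \<Rightarrow> 'a::comm_ring_1"
  shows "(\<Sum>i\<in>{1..d}. \<Sum>j<i. (c i - c (i - 1)) * g j) = (\<Sum>j<d. (c d - c j) * g j)"
proof (induction d)
  case (Suc d)
  have "(\<Sum>i\<in>{1..Suc d}. \<Sum>j<i. (c i - c (i - 1)) * g j)
      = (\<Sum>j<Suc d. (c (Suc d) - c d) * g j) + (\<Sum>i\<in>{1..d}. \<Sum>j<i. (c i - c (i - 1)) * g j)"
    by (simp add: sum.nat_ivl_Suc')
  also have "\<dots> = (\<Sum>j<Suc d. (c (Suc d) - c d) * g j) + (\<Sum>j<d. (c d - c j) * g j)"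
    by (simp only: Suc.IH)
  also have "\<dots> = (\<Sum>j<d. (c (Suc d) - c d) * g j + (c d - c j) * g j) + (c (Suc d) - c d) * g d"
    by (simp add: sum.distrib)
  also have "\<dots> = (\<Sum>j<Suc d. (c (Suc d) - c j) * g j)"
    by (simp add: algebra_simps)
  finally show ?case .
qed simp

definition to_fract :: "'a::idom \<Rightarrow> 'a fract" where
  "to_fract x = Fract x 1"

lemma to_fract_0 [simp]: "to_fract 0 = 0"
  and to_fract_1 [simp]: "to_fract 1 = 1"
  and to_fract_add [simp]: "to_fract (x + y) = to_fract x + to_fract y"
  and to_fract_diff [simp]: "to_fract (x - y) = to_fract x - to_fract y"
  and to_fract_minus [simp]: "to_fract (- x) = - to_fract x"
  and to_fract_mult [simp]: "to_fract (x * y) = to_fract x * to_fract y"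
  and to_fract_eq_iff [simp]: "to_fract x = to_fract y \<longleftrightarrow> x = y"
  by (simp_all add: to_fract_def fract_collapse eq_fract)

lemma to_fract_eq_0_iff [simp]: "to_fract x = 0 \<longleftrightarrow> x = 0"
  using to_fract_eq_iff[of x 0] by (simp del: to_fract_eq_iff)

lemma to_fract_power [simp]: "to_fract (x ^ n) = to_fract x ^ n"
  by (induction n) simp_all

lemma to_fract_sum [simp]: "to_fract (\<Sum>i\<in>A. f i) = (\<Sum>i\<in>A. to_fract (f i))"
  by (induction A rule: infinite_finite_induct) simp_all

lemma to_fract_prod [simp]: "to_fract (\<Prod>i\<in>A. f i) = (\<Prod>i\<in>A. to_fract (f i))"
  by (induction A rule: infinite_finite_induct) simp_all

lemma to_fract_power_diff:
  "a \<noteq> 0 \<Longrightarrow> r \<le> n \<Longrightarrow> to_fract (a ^ (n - r)) = to_fract (a ^ n) / to_fract a ^ r"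
  using power_diff[of "to_fract a" r n] by simp


section \<open>Power sums over finite additive subgroups\<close>

locale finite_additive_subgroup =
  fixes V :: "'a::idom set"
  assumes finite_V [simp]: "finite V"
    and zero_mem: "0 \<in> V"
    and diff_mem: "x \<in> V \<Longrightarrow> y \<in> V \<Longrightarrow> x - y \<in> V"
begin

lemma uminus_mem: "x \<in> V \<Longrightarrow> - x \<in> V"
  using diff_mem[OF zero_mem, of x] by simp

lemma add_mem: "x \<in> V \<Longrightarrow> y \<in> V \<Longrightarrow> x + y \<in> V"
  using diff_mem[of x "- y"] uminus_mem[of y] by simp

lemma card_pos: "card V > 0"
  using zero_mem by (auto simp: card_gt_0_iff)

definition vanishing_poly :: "'a poly" where
  "vanishing_poly = (\<Prod>v\<in>V. [:-v,1:])"

definition neg_prod_nonzero :: 'a where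
  "neg_prod_nonzero = (\<Prod>w\<in>V-{0}. - w)"

definition power_sum :: "nat \<Rightarrow> 'a" where
  "power_sum m = (\<Sum>v\<in>V. v ^ m)"

lemma degree_vanishing_poly: "degree vanishing_poly = card V"
  and coeff_vanishing_poly_card: "coeff vanishing_poly (card V) = 1"
  by (simp_all add: vanishing_poly_def degree_prod_linear_factors coeff_prod_linear_factors_card)

lemma pderiv_vanishing_poly_eq_sum: "pderiv vanishing_poly = (\<Sum>v\<in>V. \<Prod>w\<in>V-{v}. [:-w,1:])"
  unfolding vanishing_poly_def pderiv_prod by (simp add: pderiv_pCons)

text \<open>Translation by \<open>u \<in> V\<close> permutes \<open>V\<close>, so this value does not depend on \<open>u\<close>.\<close>
lemma poly_pderiv_vanishing_poly:
  assumes "u \<in> V"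
  shows "poly (pderiv vanishing_poly) u = neg_prod_nonzero"
proof -
  have "poly (pderiv vanishing_poly) u = (\<Sum>v\<in>V. \<Prod>w\<in>V-{v}. u - w)"
    by (simp add: pderiv_vanishing_poly_eq_sum poly_sum poly_prod)
  also have "\<dots> = (\<Prod>w\<in>V-{u}. u - w)"
  proof (rule sum_eq_single)
    fix v assume "v \<in> V" "v \<noteq> u"
    then show "(\<Prod>w\<in>V-{v}. u - w) = 0"
      using assms by (intro prod_zero) (auto intro!: bexI[of _ u])
  qed (use assms in auto)
  also have "\<dots> = (\<Prod>w\<in>V-{0}. - w)"
    by (rule prod.reindex_bij_witness[of _ "\<lambda>w. w + u" "\<lambda>w. w - u"])
       (auto simp: assms add_mem diff_mem)
  finally show ?thesis
    by (simp add: neg_prod_nonzero_def)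
qed

lemma pderiv_vanishing_poly: "pderiv vanishing_poly = [:neg_prod_nonzero:]"
proof (rule poly_eqI_degree[where A = V])
  show "degree (pderiv vanishing_poly) < card V"
    using degree_pderiv_le[of vanishing_poly] card_pos by (simp add: degree_vanishing_poly)
qed (use card_pos poly_pderiv_vanishing_poly in auto)

lemma coeff_pderiv_vanishing_poly:
  "coeff (pderiv vanishing_poly) j = (\<Sum>i<card V. coeff vanishing_poly (j + 1 + i) * power_sum i)"
proof -
  have "coeff (\<Prod>w\<in>V-{v}. [:-w,1:]) j = (\<Sum>i<card V. coeff vanishing_poly (j + 1 + i) * v ^ i)"
    if v: "v \<in> V" for v
  proof (rule coeff_eq_sum_coeff_mult_linear)
    show "vanishing_poly = [:-v,1:] * (\<Prod>w\<in>V-{v}. [:-w,1:])"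
      unfolding vanishing_poly_def using v by (simp add: prod.remove)
    show "degree (\<Prod>w\<in>V-{v}. [:-w,1:]) < j + card V"
      using degree_prod_linear_factors[of "V - {v}"] v card_pos by simp
  qed
  then have "coeff (pderiv vanishing_poly) j
      = (\<Sum>v\<in>V. \<Sum>i<card V. coeff vanishing_poly (j + 1 + i) * v ^ i)"
    by (simp add: pderiv_vanishing_poly_eq_sum coeff_sum)
  then show ?thesis
    by (subst (asm) sum.swap) (simp add: power_sum_def sum_distrib_left)
qed

lemma power_sum_eq_0: "m + 2 \<le> card V \<Longrightarrow> power_sum m = 0"
proof (induction m rule: less_induct)
  case (less m)
  define j where "j = card V - 1 - m"
  have "j \<ge> 1" and top: "j + 1 + m = card V"
    using less.prems by (simp_all add: j_def)
  have "0 = coeff (pderiv vanishing_poly) j"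
    using \<open>j \<ge> 1\<close> by (simp add: pderiv_vanishing_poly coeff_pCons split: nat.split)
  also have "\<dots> = coeff vanishing_poly (j + 1 + m) * power_sum m"
    unfolding coeff_pderiv_vanishing_poly
  proof (rule sum_eq_single)
    fix i assume i: "i \<in> {..<card V}" "i \<noteq> m"
    show "coeff vanishing_poly (j + 1 + i) * power_sum i = 0"
    proof (cases "i < m")
      case True
      then show ?thesis using less.IH[of i] less.prems by simp
    next
      case False
      then show ?thesis using i top by (simp add: coeff_eq_0 degree_vanishing_poly)
    qed
  qed (use less.prems in auto)
  finally show ?case
    by (simp only: top coeff_vanishing_poly_card) simp
qed

lemma power_sum_card_minus_1: "power_sum (card V - 1) = neg_prod_nonzero"
proof -
  have "neg_prod_nonzero = coeff (pderiv vanishing_poly) 0"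
    by (simp add: pderiv_vanishing_poly)
  also have "\<dots> = coeff vanishing_poly (0 + 1 + (card V - 1)) * power_sum (card V - 1)"
    unfolding coeff_pderiv_vanishing_poly
    by (rule sum_eq_single) (use card_pos power_sum_eq_0 in auto)
  also have "0 + 1 + (card V - 1) = card V"
    using card_pos by simp
  finally show ?thesis
    by (simp add: coeff_vanishing_poly_card)
qed

lemma sum_translate_power:
  "(\<Sum>v\<in>V. (x + v) ^ m) = (\<Sum>i\<le>m. of_nat (m choose i) * x ^ (m - i) * power_sum i)"
proof -
  have "(\<Sum>v\<in>V. (x + v) ^ m) = (\<Sum>v\<in>V. \<Sum>i\<le>m. of_nat (m choose i) * v ^ i * x ^ (m - i))"
    by (simp add: binomial_ring add.commute)
  then show ?thesis
    by (subst (asm) sum.swap) (simp add: power_sum_def sum_distrib_left sum_distrib_right mult_ac)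
qed

lemma sum_translate_power_eq_0: "m + 2 \<le> card V \<Longrightarrow> (\<Sum>v\<in>V. (x + v) ^ m) = 0"
  by (simp add: sum_translate_power power_sum_eq_0)

lemma sum_translate_power_card_minus_1: "(\<Sum>v\<in>V. (x + v) ^ (card V - 1)) = neg_prod_nonzero"
  unfolding sum_translate_power
  by (subst sum_eq_single[of _ "card V - 1"]) (auto simp: power_sum_eq_0 power_sum_card_minus_1[unfolded One_nat_def])

text \<open>The logarithmic derivative of the vanishing polynomial, evaluated outside \<open>V\<close>.\<close>
lemma to_fract_neg_prod_nonzero:
  assumes "x \<notin> V"
  shows "to_fract neg_prod_nonzero = (\<Prod>w\<in>V. to_fract (x - w)) * (\<Sum>v\<in>V. 1 / to_fract (x - v))"
proof -
  have nz: "x \<noteq> v" if "v \<in> V" for v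
    using assms that by auto
  have "neg_prod_nonzero = poly (pderiv vanishing_poly) x"
    by (simp add: pderiv_vanishing_poly)
  then have "to_fract neg_prod_nonzero = (\<Sum>v\<in>V. \<Prod>w\<in>V-{v}. to_fract (x - w))"
    by (simp add: pderiv_vanishing_poly_eq_sum poly_sum poly_prod del: to_fract_diff)
  also have "\<dots> = (\<Sum>v\<in>V. (\<Prod>w\<in>V. to_fract (x - w)) * (1 / to_fract (x - v)))"
    by (intro sum.cong refl) (simp add: prod.remove nz del: to_fract_diff)
  finally show ?thesis
    by (simp add: sum_distrib_left)
qed

end


section \<open>Finite fields\<close>

lemma card_ge_2: "CARD('a::{finite,field}) \<ge> 2"
proof -
  have "card {0::'a, 1} \<le> CARD('a)"
    by (intro card_mono) auto
  then show ?thesis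
    by simp
qed

lemma power_card_minus_1_eq_1:
  fixes x :: "'a::{finite,field}"
  assumes "x \<noteq> 0"
  shows "x ^ (CARD('a) - 1) = 1"
proof -
  have "x ^ (CARD('a) - 1) * (\<Prod>y\<in>UNIV-{0}. y) = (\<Prod>y\<in>UNIV-{0}. x * y)"
    by (simp add: prod.distrib card_Diff_singleton)
  also have "\<dots> = 1 * (\<Prod>y\<in>UNIV-{0::'a}. y)"
    by (simp, rule prod.reindex_bij_witness[of _ "\<lambda>y. y / x" "\<lambda>y. x * y"]) (use assms in auto)
  finally show ?thesis
    by (subst (asm) mult_right_cancel) auto
qed

lemma power_card_eq_same: "(x::'a::{finite,field}) ^ CARD('a) = x"
proof (cases "x = 0")
  case False
  have "x ^ CARD('a) = x * x ^ (CARD('a) - 1)"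
    using card_ge_2[where 'a = 'a] by (simp flip: power_Suc)
  then show ?thesis
    using power_card_minus_1_eq_1[OF False] by simp
qed (use card_ge_2[where 'a = 'a] in simp)

lemma power_card_power_eq_same: "(x::'a::{finite,field}) ^ (CARD('a) ^ j) = x"
  by (induction j) (simp_all add: power_card_eq_same power_mult mult.commute[of "CARD('a)"])

text \<open>The polynomial \<open>(X + 1)\<^sup>q - X\<^sup>q - 1\<close> has degree below \<open>q\<close> but vanishes on all of \<open>\<bbbF>\<^sub>q\<close>.\<close>
lemma binomial_card_eq_0:
  assumes "0 < i" "i < CARD('a::{finite,field})"
  shows "(of_nat (CARD('a) choose i) :: 'a) = 0"
proof -
  define q where "q = CARD('a)"
  define P :: "'a poly" where "P = [:1,1:] ^ q - monom 1 q - 1"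
  have "P = 0"
  proof (rule poly_eqI_degree_lead_coeff[where A = UNIV and n = q])
    show "coeff P q = coeff 0 q"
      using card_ge_2[where 'a = 'a] by (simp add: P_def coeff_linear_poly_power q_def)
    show "degree P \<le> q"
      unfolding P_def
      by (intro degree_diff_le) (auto simp: degree_linear_power degree_monom_le)
    show "poly P z = poly 0 z" for z
      by (simp add: P_def poly_monom q_def power_card_eq_same add.commute)
  qed (simp_all add: q_def)
  then have "coeff P i = 0"
    by simp
  then show ?thesis
    using assms by (simp add: P_def coeff_linear_poly_power q_def)
qed

lemma frobenius_add: "((x::'a::{finite,field} poly) + y) ^ CARD('a) = x ^ CARD('a) + y ^ CARD('a)"
proof -
  define q where "q = CARD('a)"
  have "(x + y) ^ q = (\<Sum>k\<le>q. of_nat (q choose k) * x ^ k * y ^ (q - k))"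
    by (rule binomial_ring)
  also have "\<dots> = (\<Sum>k\<in>{0,q}. of_nat (q choose k) * x ^ k * y ^ (q - k))"
  proof (intro sum.mono_neutral_right ballI)
    fix k assume "k \<in> {..q} - {0, q}"
    then have "(of_nat (q choose k) :: 'a) = 0"
      using binomial_card_eq_0[where 'a = 'a] by (auto simp: q_def)
    then show "of_nat (q choose k) * x ^ k * y ^ (q - k) = 0"
      by (simp add: of_nat_poly)
  qed auto
  finally show ?thesis
    using card_ge_2[where 'a = 'a] by (simp add: q_def add.commute)
qed

lemma frobenius_diff: "((x::'a::{finite,field} poly) - y) ^ CARD('a) = x ^ CARD('a) - y ^ CARD('a)"
  using frobenius_add[of "x - y" y] by (simp add: algebra_simps)

lemma frobenius_power_add:
  "((x::'a::{finite,field} poly) + y) ^ (CARD('a) ^ j) = x ^ (CARD('a) ^ j) + y ^ (CARD('a) ^ j)"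
  by (induction j) (simp_all add: power_mult frobenius_add mult.commute[of "CARD('a)"])

lemma prod_nonzero_uminus_eq_minus_1: "(\<Prod>c\<in>UNIV-{0}. - c) = (-1::'a::{finite,field})"
proof -
  define Z where "Z = (UNIV - {0::'a})"
  have card_Z: "card Z = CARD('a) - 1"
    by (simp add: Z_def card_Diff_singleton)
  define P :: "'a poly" where "P = monom 1 (card Z) - 1"
  have "P = smult (coeff P (card Z)) (\<Prod>z\<in>Z. [:-z,1:])"
  proof (rule poly_eq_smult_prod_roots)
    show "degree P \<le> card Z"
      unfolding P_def by (intro degree_diff_le) (auto simp: degree_monom_le)
    show "poly P z = 0" if "z \<in> Z" for z
      using that power_card_minus_1_eq_1[of z] by (simp add: P_def Z_def card_Z poly_monom)
  qed (simp add: Z_def)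
  then have "poly P 0 = poly (smult (coeff P (card Z)) (\<Prod>z\<in>Z. [:-z,1:])) 0"
    by (rule arg_cong)
  also have "\<dots> = (\<Prod>z\<in>Z. - z)"
    using card_Z card_ge_2[where 'a = 'a] by (simp add: P_def poly_prod)
  finally have "poly P 0 = (\<Prod>z\<in>Z. - z)" .
  moreover have "poly P 0 = -1"
    using card_Z card_ge_2[where 'a = 'a] by (simp add: P_def poly_monom)
  ultimately show ?thesis
    by (simp add: Z_def)
qed


section \<open>Polynomials of bounded degree over a finite field\<close>

definition polys_deg_less :: "nat \<Rightarrow> 'a::zero poly set" where
  "polys_deg_less k = {v. \<forall>i\<ge>k. coeff v i = 0}"

definition monic_polys :: "nat \<Rightarrow> 'a::{zero,one} poly set" where
  "monic_polys k = {a. lead_coeff a = 1 \<and> degree a = k}"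

lemma polys_deg_less_0: "polys_deg_less 0 = {0}"
  by (auto simp: polys_deg_less_def intro: poly_eqI)

lemma polys_deg_less_Suc:
  "polys_deg_less (Suc k) = (\<lambda>(c, v). monom c k + v) ` (UNIV \<times> (polys_deg_less k :: 'a::field poly set))"
proof (intro set_eqI iffI)
  fix w :: "'a poly"
  assume "w \<in> polys_deg_less (Suc k)"
  then have "(coeff w k, w - monom (coeff w k) k) \<in> UNIV \<times> polys_deg_less k"
    by (auto simp: polys_deg_less_def coeff_monom)
  then show "w \<in> (\<lambda>(c, v). monom c k + v) ` (UNIV \<times> polys_deg_less k)"
    by (rule rev_image_eqI) simp
qed (auto simp: polys_deg_less_def coeff_monom)

lemma inj_on_polys_deg_less_Suc:
  "inj_on (\<lambda>(c, v). monom c k + v) (UNIV \<times> (polys_deg_less k :: 'a::field poly set))"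
proof (rule inj_onI, clarify)
  fix c c' :: 'a and v v'
  assume v: "v \<in> polys_deg_less k" "v' \<in> polys_deg_less k" and eq: "monom c k + v = monom c' k + v'"
  have "coeff (monom c k + v) k = coeff (monom c' k + v') k"
    by (simp only: eq)
  then have "c = c'"
    using v by (simp add: polys_deg_less_def)
  with eq show "c = c' \<and> v = v'"
    by simp
qed

lemma card_polys_deg_less: "card (polys_deg_less k :: 'a::{finite,field} poly set) = CARD('a) ^ k"
  by (induction k)
     (simp_all add: polys_deg_less_0 polys_deg_less_Suc card_image[OF inj_on_polys_deg_less_Suc] card_cartesian_product)

lemma finite_polys_deg_less [simp]: "finite (polys_deg_less k :: 'a::{finite,field} poly set)"
  using card_polys_deg_less[where 'a = 'a, of k] by (intro card_ge_0_finite) simp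

lemma finite_additive_subgroup_polys_deg_less:
  "finite_additive_subgroup (polys_deg_less k :: 'a::{finite,field} poly set)"
  by (unfold_locales, simp) (auto simp: polys_deg_less_def)

lemma monom_add_polys_deg_less_nonzero:
  assumes "c \<noteq> 0" "v \<in> polys_deg_less k"
  shows "monom c k + v \<noteq> (0 :: 'a::field poly)"
proof
  assume "monom c k + v = 0"
  then have "coeff (monom c k + v) k = 0"
    by simp
  with assms show False
    by (simp add: polys_deg_less_def)
qed

lemma smult_mem_polys_deg_less: "v \<in> polys_deg_less k \<Longrightarrow> smult c v \<in> polys_deg_less k"
  by (simp add: polys_deg_less_def)

lemma monic_polys_eq_image:
  "monic_polys k = (\<lambda>v. monom 1 k + v) ` (polys_deg_less k :: 'a::field poly set)"
proof (intro set_eqI iffI)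
  fix a :: "'a poly"
  assume "a \<in> monic_polys k"
  then have "a - monom 1 k \<in> polys_deg_less k"
    by (auto simp: monic_polys_def polys_deg_less_def coeff_monom coeff_eq_0)
  then show "a \<in> (\<lambda>v. monom 1 k + v) ` polys_deg_less k"
    by (rule rev_image_eqI) simp
next
  fix a :: "'a poly"
  assume "a \<in> (\<lambda>v. monom 1 k + v) ` polys_deg_less k"
  then obtain v where v: "v \<in> polys_deg_less k" and a: "a = monom 1 k + v"
    by blast
  have "coeff a k = 1"
    using v by (simp add: a polys_deg_less_def)
  moreover have "degree a \<le> k"
    using v by (intro degree_le) (auto simp: a polys_deg_less_def coeff_monom)
  ultimately have "degree a = k"
    by (simp add: le_antisym le_degree)
  with \<open>coeff a k = 1\<close> show "a \<in> monic_polys k"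
    by (simp add: monic_polys_def)
qed

lemma sum_monic_polys:
  "(\<Sum>a\<in>monic_polys k. f a) = (\<Sum>v\<in>polys_deg_less k. f (monom 1 k + (v :: 'a::field poly)))"
  and prod_monic_polys:
  "(\<Prod>a\<in>monic_polys k. g a) = (\<Prod>v\<in>polys_deg_less k. g (monom 1 k + (v :: 'a poly)))"
  unfolding monic_polys_eq_image by (simp_all add: sum.reindex prod.reindex inj_on_def)

lemma finite_monic_polys [simp]: "finite (monic_polys k :: 'a::{finite,field} poly set)"
  unfolding monic_polys_eq_image by simp

lemma monic_polys_nonzero: "a \<in> monic_polys k \<Longrightarrow> (a :: 'a::field poly) \<noteq> 0"
  by (auto simp: monic_polys_def)

lemma monic_polys_0: "monic_polys 0 = {1 :: 'a::field poly}"
  unfolding monic_polys_eq_image polys_deg_less_0 by simp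

lemma sum_monic_polys_power_eq_0:
  "m + 2 \<le> CARD('a) ^ k \<Longrightarrow> (\<Sum>a\<in>monic_polys k. a ^ m :: 'a::{finite,field} poly) = 0"
  using finite_additive_subgroup.sum_translate_power_eq_0[OF finite_additive_subgroup_polys_deg_less]
  by (simp add: sum_monic_polys card_polys_deg_less)

lemma sum_monic_polys_power_card_minus_1:
  "(\<Sum>a\<in>monic_polys k. a ^ (CARD('a) ^ k - 1) :: 'a::{finite,field} poly)
     = finite_additive_subgroup.neg_prod_nonzero (polys_deg_less k)"
  using finite_additive_subgroup.sum_translate_power_card_minus_1[OF finite_additive_subgroup_polys_deg_less]
  by (simp add: sum_monic_polys card_polys_deg_less)

lemma theta_power: "theta ^ n = (monom 1 n :: 'a::field poly)"
  by (simp add: theta_def monom_altdef)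

lemma theta_power_inj: "theta ^ m = (theta ^ n :: 'a::field poly) \<Longrightarrow> m = n"
  by (metis theta_power degree_monom_eq one_neq_zero)

lemma power_card_power_eq_pcompose:
  "(a::'a::{finite,field} poly) ^ (CARD('a) ^ j) = pcompose a (theta ^ (CARD('a) ^ j))"
proof (induction a)
  case (pCons c p)
  define Q where "Q = CARD('a) ^ j"
  have "pCons c p ^ Q = ([:c:] + theta * p) ^ Q"
    by (simp add: theta_def)
  also have "\<dots> = [:c:] + theta ^ Q * p ^ Q"
    by (simp add: Q_def frobenius_power_add power_mult_distrib poly_const_pow power_card_power_eq_same)
  also have "\<dots> = pcompose (pCons c p) (theta ^ Q)"
    by (simp add: Q_def pcompose_pCons pCons.IH)
  finally show ?case
    by (simp add: Q_def)
qed (use card_ge_2[where 'a = 'a] in simp)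


section \<open>Interpolation over the fraction field\<close>

text \<open>A polynomial over \<open>\<bbbF>\<^sub>q\<close> viewed as a polynomial in a new variable over \<open>\<bbbF>\<^sub>q(\<theta>)\<close>.\<close>
definition fract_poly :: "'a::field poly \<Rightarrow> 'a poly fract poly" where
  "fract_poly a = map_poly (\<lambda>c. to_fract [:c:]) a"

lemma coeff_fract_poly: "coeff (fract_poly a) i = to_fract [:coeff a i:]"
  by (simp add: fract_poly_def coeff_map_poly)

lemma degree_fract_poly: "degree (fract_poly a) = degree a"
  by (simp add: fract_poly_def degree_map_poly)

lemma poly_fract_poly: "poly (fract_poly a) (to_fract b) = to_fract (pcompose a b)"
  by (induction a) (simp_all add: fract_poly_def map_poly_pCons pcompose_pCons)

lemma poly_fract_poly_theta_power:
  "poly (fract_poly a) (to_fract (theta ^ (CARD('a) ^ j))) = to_fract ((a::'a::{finite,field} poly) ^ (CARD('a) ^ j))"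
  by (subst power_card_power_eq_pcompose[of a]) (rule poly_fract_poly)

lemma to_fract_theta_power_inj: "inj (\<lambda>j. to_fract (theta ^ (CARD('a::{finite,field}) ^ j) :: 'a poly))"
proof (rule injI)
  fix i j
  assume "to_fract (theta ^ (CARD('a) ^ i) :: 'a poly) = to_fract (theta ^ (CARD('a) ^ j))"
  then have "CARD('a) ^ i = CARD('a) ^ j"
    by (simp only: to_fract_eq_iff theta_power_inj)
  then show "i = j"
    using card_ge_2[where 'a = 'a] by (simp add: power_inject_exp)
qed

text \<open>
  The combination \<open>\<Sum>\<^sub>a w\<^sub>a a(X)\<close> has degree at most \<open>k\<close>, and the hypothesis says it vanishes
  at the \<open>k\<close> distinct points \<open>\<theta>\<^bsup>q\<^sup>j\<^esup>\<close>, \<open>j \<in> J\<close>.\<close>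
lemma sum_monic_polys_interpolation:
  fixes w :: "'a::{finite,field} poly \<Rightarrow> 'a poly fract"
  assumes "finite J" "card J = k"
    and "\<And>j. j \<in> J \<Longrightarrow> (\<Sum>a\<in>monic_polys k. w a * to_fract (a ^ (CARD('a) ^ j))) = 0"
  shows "(\<Sum>a\<in>monic_polys k. w a * poly (fract_poly a) x)
           = (\<Sum>a\<in>monic_polys k. w a) * (\<Prod>j\<in>J. x - to_fract (theta ^ (CARD('a) ^ j)))"
proof -
  define P where "P = (\<Sum>a\<in>monic_polys k. smult (w a) (fract_poly a))"
  define \<tau> where "\<tau> j = to_fract (theta ^ (CARD('a) ^ j) :: 'a poly)" for j
  have inj: "inj_on \<tau> J"
    using to_fract_theta_power_inj by (auto simp: \<tau>_def inj_on_def inj_def)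
  have card: "card (\<tau> ` J) = k"
    using assms(2) by (simp add: card_image[OF inj])
  have "P = smult (coeff P (card (\<tau> ` J))) (\<Prod>z\<in>\<tau> ` J. [:-z,1:])"
  proof (rule poly_eq_smult_prod_roots)
    show "degree P \<le> card (\<tau> ` J)"
      unfolding P_def card
      by (intro degree_sum_le finite_monic_polys)
         (auto intro: order.trans[OF degree_smult_le] simp: degree_fract_poly monic_polys_def)
    show "poly P z = 0" if "z \<in> \<tau> ` J" for z
      using that assms(3)
      by (auto simp: P_def \<tau>_def poly_sum poly_fract_poly_theta_power simp del: to_fract_power)
  qed (use assms(1) in simp)
  from arg_cong[OF this, of "\<lambda>p. poly p x"]
  have "poly P x = coeff P (card (\<tau> ` J)) * (\<Prod>z\<in>\<tau> ` J. x - z)"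
    by (simp add: poly_prod)
  also have "coeff P (card (\<tau> ` J)) = (\<Sum>a\<in>monic_polys k. w a)"
    unfolding P_def card coeff_sum
    by (intro sum.cong) (auto simp: coeff_fract_poly monic_polys_def simp flip: one_pCons)
  also have "(\<Prod>z\<in>\<tau> ` J. x - z) = (\<Prod>j\<in>J. x - \<tau> j)"
    by (simp add: prod.reindex[OF inj])
  finally have "poly P x = (\<Sum>a\<in>monic_polys k. w a) * (\<Prod>j\<in>J. x - \<tau> j)" .
  then show ?thesis
    by (simp add: P_def \<tau>_def poly_sum del: to_fract_power)
qed


section \<open>Carlitz's identities\<close>

lemma sum_monic_polys_inverse_power_interpolation:
  fixes x :: "'a::{finite,field} poly fract"
  assumes "finite J" "card J = k"
    and "\<And>j. j \<in> J \<Longrightarrow> r \<le> CARD('a) ^ j \<and> CARD('a) ^ j + 2 \<le> CARD('a) ^ k + r"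
  shows "(\<Sum>a\<in>monic_polys k. poly (fract_poly a) x / to_fract a ^ r)
           = (\<Sum>a\<in>monic_polys k. 1 / to_fract a ^ r) * (\<Prod>j\<in>J. x - to_fract (theta ^ (CARD('a) ^ j)))"
proof -
  have "(\<Sum>a\<in>(monic_polys k :: 'a poly set). 1 / to_fract a ^ r * to_fract (a ^ (CARD('a) ^ j))) = 0" if "j \<in> J" for j
  proof -
    have "1 / to_fract a ^ r * to_fract (a ^ (CARD('a) ^ j)) = to_fract (a ^ (CARD('a) ^ j - r))"
      if "a \<in> monic_polys k" for a :: "'a poly"
      using assms(3)[OF \<open>j \<in> J\<close>] monic_polys_nonzero[OF that]
      by (simp add: to_fract_power_diff del: to_fract_power)
    then have "(\<Sum>a\<in>(monic_polys k :: 'a poly set). 1 / to_fract a ^ r * to_fract (a ^ (CARD('a) ^ j)))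
        = (\<Sum>a\<in>monic_polys k. to_fract (a ^ (CARD('a) ^ j - r)))"
      by (rule sum.cong[OF refl])
    also have "\<dots> = to_fract (\<Sum>a\<in>monic_polys k. a ^ (CARD('a) ^ j - r))"
      by simp
    also have "\<dots> = 0"
    proof -
      have "CARD('a) ^ j - r + 2 \<le> CARD('a) ^ k"
        using assms(3)[OF that] by linarith
      then show ?thesis
        by (simp only: sum_monic_polys_power_eq_0 to_fract_0)
    qed
    finally show ?thesis .
  qed
  from sum_monic_polys_interpolation[OF assms(1,2), of "\<lambda>a. 1 / to_fract a ^ r", OF this]
  show ?thesis
    by simp
qed

lemma to_fract_sum_monic_polys_power_eq:
  fixes r :: nat
  assumes "finite J" "card J = k"
    and "\<And>j. j \<in> J \<Longrightarrow> r \<le> CARD('a) ^ j \<and> CARD('a) ^ j + 2 \<le> CARD('a) ^ k + r"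
    and "r \<le> CARD('a) ^ m"
  shows "to_fract (\<Sum>a\<in>monic_polys k. a ^ (CARD('a) ^ m - r) :: 'a::{finite,field} poly)
           = (\<Sum>a\<in>monic_polys k. 1 / to_fract a ^ r)
             * to_fract (\<Prod>j\<in>J. theta ^ (CARD('a) ^ m) - theta ^ (CARD('a) ^ j) :: 'a poly)"
proof -
  have "to_fract (a ^ (CARD('a) ^ m - r))
      = poly (fract_poly a) (to_fract (theta ^ (CARD('a) ^ m))) / to_fract a ^ r"
    if "a \<in> monic_polys k" for a :: "'a poly"
    using assms(4) monic_polys_nonzero[OF that]
    by (simp add: to_fract_power_diff poly_fract_poly_theta_power del: to_fract_power)
  then have "(\<Sum>a\<in>(monic_polys k :: 'a poly set). to_fract (a ^ (CARD('a) ^ m - r)))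
      = (\<Sum>a\<in>monic_polys k. poly (fract_poly a) (to_fract (theta ^ (CARD('a) ^ m))) / to_fract a ^ r)"
    by (rule sum.cong[OF refl])
  also have "\<dots> = (\<Sum>a\<in>monic_polys k. 1 / to_fract a ^ r)
                  * (\<Prod>j\<in>J. to_fract (theta ^ (CARD('a) ^ m)) - to_fract (theta ^ (CARD('a) ^ j)))"
    by (rule sum_monic_polys_inverse_power_interpolation[OF assms(1-3)])
  finally show ?thesis
    by (simp del: to_fract_power)
qed

definition monic_prod :: "nat \<Rightarrow> 'a::{finite,field} poly" where
  "monic_prod k = (\<Prod>a\<in>monic_polys k. a)"

definition sum_inverse_monic :: "nat \<Rightarrow> 'a::{finite,field} poly fract" where
  "sum_inverse_monic k = (\<Sum>a\<in>monic_polys k. 1 / to_fract a)"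

definition neg_prod_deg_less :: "nat \<Rightarrow> 'a::{finite,field} poly" where
  "neg_prod_deg_less k = (\<Prod>w\<in>polys_deg_less k - {0}. - w)"

lemma neg_prod_deg_less_eq_locale:
  "neg_prod_deg_less k = finite_additive_subgroup.neg_prod_nonzero (polys_deg_less k :: 'a::{finite,field} poly set)"
  by (simp add: neg_prod_deg_less_def finite_additive_subgroup.neg_prod_nonzero_def[OF finite_additive_subgroup_polys_deg_less])

lemma neg_prod_deg_less_nonzero: "neg_prod_deg_less k \<noteq> 0"
  by (simp add: neg_prod_deg_less_def)

lemma to_fract_neg_prod_deg_less_eq_monic_prod:
  "to_fract (neg_prod_deg_less k) = sum_inverse_monic k * to_fract (monic_prod k :: 'a::{finite,field} poly)"
proof -
  interpret finite_additive_subgroup "polys_deg_less k :: 'a poly set"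
    by (rule finite_additive_subgroup_polys_deg_less)
  define x :: "'a poly" where "x = monom 1 k"
  have "x \<notin> polys_deg_less k"
    by (simp add: x_def polys_deg_less_def exI[of _ k])
  then have "to_fract (neg_prod_deg_less k)
      = (\<Prod>w\<in>polys_deg_less k. to_fract (x - w)) * (\<Sum>v\<in>polys_deg_less k. 1 / to_fract (x - v))"
    by (simp only: neg_prod_deg_less_eq_locale to_fract_neg_prod_nonzero)
  also have "(\<Prod>w\<in>polys_deg_less k. to_fract (x - w)) = (\<Prod>w\<in>polys_deg_less k. to_fract (x + w))"
    by (rule prod.reindex_bij_witness[of _ uminus uminus]) (auto simp: uminus_mem simp del: to_fract_diff to_fract_add)
  also have "(\<Sum>v\<in>polys_deg_less k. 1 / to_fract (x - v)) = (\<Sum>v\<in>polys_deg_less k. 1 / to_fract (x + v))"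
    by (rule sum.reindex_bij_witness[of _ uminus uminus]) (auto simp: uminus_mem simp del: to_fract_diff to_fract_add)
  finally show ?thesis
    by (simp add: monic_prod_def sum_inverse_monic_def prod_monic_polys sum_monic_polys x_def mult.commute
        del: to_fract_add)
qed

lemma to_fract_neg_prod_deg_less_eq_bcar:
  assumes "k \<ge> 1"
  shows "to_fract (neg_prod_deg_less k) = sum_inverse_monic k * to_fract (bcar k k :: 'a::{finite,field} poly)"
proof -
  have "CARD('a) ^ j + 2 \<le> CARD('a) ^ k + 1" if "j < k" for j
  proof -
    have "CARD('a) ^ j * 2 \<le> CARD('a) ^ Suc j"
      using card_ge_2[where 'a = 'a] by simp
    also have "\<dots> \<le> CARD('a) ^ k"
      using that card_ge_2[where 'a = 'a] by (intro power_increasing) auto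
    finally show ?thesis
      using one_le_power[of "CARD('a)" j] card_ge_2[where 'a = 'a] by linarith
  qed
  then have "to_fract (\<Sum>a\<in>monic_polys k. a ^ (CARD('a) ^ k - 1))
      = (\<Sum>a\<in>monic_polys k. 1 / to_fract a ^ 1) * to_fract (bcar k k :: 'a poly)"
    unfolding bcar_def using card_ge_2[where 'a = 'a]
    by (intro to_fract_sum_monic_polys_power_eq) auto
  then show ?thesis
    unfolding neg_prod_deg_less_eq_locale sum_monic_polys_power_card_minus_1[symmetric] sum_inverse_monic_def
    by simp
qed

lemma monic_prod_eq_bcar: "monic_prod k = (bcar k k :: 'a::{finite,field} poly)"
proof (cases "k = 0")
  case True
  then show ?thesis
    by (simp add: monic_prod_def monic_polys_0 bcar_def)
next
  case False
  then have "sum_inverse_monic k * to_fract (monic_prod k :: 'a poly) = sum_inverse_monic k * to_fract (bcar k k)"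
    by (simp flip: to_fract_neg_prod_deg_less_eq_monic_prod to_fract_neg_prod_deg_less_eq_bcar)
  moreover have "sum_inverse_monic k \<noteq> (0 :: 'a poly fract)"
    using to_fract_neg_prod_deg_less_eq_monic_prod[of k] neg_prod_deg_less_nonzero[of k]
    by (metis mult_zero_left to_fract_eq_0_iff)
  ultimately show ?thesis
    by simp
qed

lemma bcar_Suc_diag:
  "bcar (Suc k) (Suc k) = (theta ^ (CARD('a) ^ Suc k) - theta) * (bcar k k :: 'a::{finite,field} poly) ^ CARD('a)"
proof -
  have "(bcar k k :: 'a poly) ^ CARD('a) = (\<Prod>j<k. theta ^ (CARD('a) ^ Suc k) - theta ^ (CARD('a) ^ Suc j))"
    by (simp add: bcar_def prod_power_distrib frobenius_diff mult.commute flip: power_mult)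
  moreover have "bcar (Suc k) (Suc k) = (theta ^ (CARD('a) ^ Suc k) - theta)
      * (\<Prod>j<k. theta ^ (CARD('a) ^ Suc k) - (theta :: 'a poly) ^ (CARD('a) ^ Suc j))"
    unfolding bcar_def by (subst prod.lessThan_Suc_shift) simp
  ultimately show ?thesis
    by simp
qed

text \<open>
  Sorting the nonzero \<open>w = c \<theta>\<^sup>k + v\<close> of degree \<open>k\<close> by their leading coefficient \<open>c\<close>:
  each class is \<open>c\<close> times the monic polynomials of degree \<open>k\<close>.\<close>
lemma prod_uminus_monom_add_polys_deg_less:
  fixes c :: "'a::{finite,field}"
  assumes "c \<noteq> 0"
  shows "(\<Prod>v\<in>polys_deg_less k. - (monom c k + v)) = [:-c:] * monic_prod k"
proof -
  have "(\<Prod>v\<in>polys_deg_less k. - (monom c k + v))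
      = (\<Prod>v\<in>polys_deg_less k. [:-c:] * (monom 1 k + smult (inverse c) v))"
    using assms by (intro prod.cong refl) (simp add: smult_add_right smult_monom monom_altdef)
  also have "\<dots> = [:-c:] ^ card (polys_deg_less k :: 'a poly set)
                  * (\<Prod>v\<in>polys_deg_less k. monom 1 k + smult (inverse c) v)"
    by (simp only: prod.distrib prod_constant)
  also have "[:-c:] ^ card (polys_deg_less k :: 'a poly set) = [:-c:]"
    by (simp add: poly_const_pow card_polys_deg_less power_card_power_eq_same)
  also have "(\<Prod>v\<in>polys_deg_less k. monom 1 k + smult (inverse c) v) = (\<Prod>v\<in>polys_deg_less k. monom 1 k + v)"
    using assms
    by (intro prod.reindex_bij_witness[of _ "smult c" "smult (inverse c)"]) (auto simp: smult_mem_polys_deg_less)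
  finally show ?thesis
    by (simp add: monic_prod_def prod_monic_polys)
qed

lemma neg_prod_deg_less_Suc:
  "neg_prod_deg_less (Suc k) = - neg_prod_deg_less k * (monic_prod k :: 'a::{finite,field} poly) ^ (CARD('a) - 1)"
proof -
  define h :: "'a poly \<Rightarrow> 'a poly" where "h w = (if w = 0 then 1 else - w)" for w
  have neg_prod_eq: "neg_prod_deg_less n = (\<Prod>w\<in>polys_deg_less n. h w)" for n
    unfolding neg_prod_deg_less_def
    by (intro prod.mono_neutral_cong_left) (auto simp: h_def)
  have "neg_prod_deg_less (Suc k) = (\<Prod>(c, v)\<in>UNIV \<times> polys_deg_less k. h (monom c k + v))"
    unfolding neg_prod_eq polys_deg_less_Suc
    by (subst prod.reindex[OF inj_on_polys_deg_less_Suc]) (simp add: case_prod_unfold)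
  also have "\<dots> = (\<Prod>c\<in>UNIV. \<Prod>v\<in>polys_deg_less k. h (monom c k + v))"
    by (rule prod.cartesian_product[symmetric])
  also have "\<dots> = (\<Prod>v\<in>polys_deg_less k. h v) * (\<Prod>c\<in>UNIV - {0}. \<Prod>v\<in>polys_deg_less k. h (monom c k + v))"
    by (simp add: prod.remove[of UNIV 0])
  also have "(\<Prod>c\<in>UNIV - {0}. \<Prod>v\<in>polys_deg_less k. h (monom c k + v)) = (\<Prod>c\<in>UNIV - {0}. [:-c:] * monic_prod k)"
  proof (intro prod.cong refl)
    fix c :: 'a
    assume "c \<in> UNIV - {0}"
    then have "c \<noteq> 0"
      by simp
    then have "(\<Prod>v\<in>polys_deg_less k. h (monom c k + v)) = (\<Prod>v\<in>polys_deg_less k. - (monom c k + v))"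
      by (intro prod.cong refl) (simp add: h_def monom_add_polys_deg_less_nonzero)
    also have "\<dots> = [:-c:] * monic_prod k"
      by (rule prod_uminus_monom_add_polys_deg_less[OF \<open>c \<noteq> 0\<close>])
    finally show "(\<Prod>v\<in>polys_deg_less k. h (monom c k + v)) = [:-c:] * monic_prod k" .
  qed
  also have "\<dots> = [:\<Prod>c\<in>UNIV - {0}. - c:] * monic_prod k ^ card (UNIV - {0 :: 'a})"
    by (simp only: prod.distrib prod_constant prod_to_poly)
  also have "\<dots> = - (monic_prod k ^ (CARD('a) - 1))"
    by (simp add: prod_nonzero_uminus_eq_minus_1 card_Diff_singleton)
  finally show ?thesis
    by (simp add: neg_prod_eq)
qed

lemma lcar_Suc: "lcar (Suc k) = lcar k * (theta - theta ^ (CARD('a) ^ Suc k) :: 'a::{finite,field} poly)"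
  by (simp add: lcar_def)

lemma lcar_nonzero: "lcar k \<noteq> (0 :: 'a::{finite,field} poly)"
proof -
  have "theta ^ 1 \<noteq> (theta ^ (CARD('a) ^ i) :: 'a poly)" if "i \<ge> 1" for i
  proof -
    have "1 < CARD('a) ^ i"
      using that card_ge_2[where 'a = 'a] by (intro one_less_power) auto
    then show ?thesis
      using theta_power_inj[of 1 "CARD('a) ^ i"] by auto
  qed
  then show ?thesis
    by (auto simp: lcar_def)
qed

lemma monic_prod_nonzero: "monic_prod k \<noteq> (0 :: 'a::{finite,field} poly)"
  by (auto simp: monic_prod_def dest: monic_polys_nonzero)

lemma neg_prod_deg_less_mult_lcar: "neg_prod_deg_less k * lcar k = (monic_prod k :: 'a::{finite,field} poly)"
proof (induction k)
  case 0
  then show ?case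
    by (simp add: neg_prod_deg_less_def polys_deg_less_0 monic_prod_def monic_polys_0 lcar_def)
next
  case (Suc k)
  define Q where "Q = CARD('a) ^ Suc k"
  have "neg_prod_deg_less (Suc k) * lcar (Suc k)
      = (neg_prod_deg_less k * lcar k) * monic_prod k ^ (CARD('a) - 1) * (theta ^ Q - theta :: 'a poly)"
    by (simp add: neg_prod_deg_less_Suc lcar_Suc Q_def algebra_simps)
  also have "\<dots> = monic_prod k ^ CARD('a) * (theta ^ Q - theta)"
    using card_ge_2[where 'a = 'a] by (simp add: Suc.IH flip: power_Suc)
  also have "\<dots> = monic_prod (Suc k)"
    by (simp add: monic_prod_eq_bcar bcar_Suc_diag Q_def)
  finally show ?case .
qed

theorem sum_inverse_monic_eq: "sum_inverse_monic k = 1 / to_fract (lcar k :: 'a::{finite,field} poly)"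
proof -
  have "to_fract (monic_prod k :: 'a poly) * 1 = to_fract (neg_prod_deg_less k) * to_fract (lcar k)"
    by (simp flip: neg_prod_deg_less_mult_lcar)
  also have "\<dots> = to_fract (monic_prod k) * (sum_inverse_monic k * to_fract (lcar k))"
    by (simp add: to_fract_neg_prod_deg_less_eq_monic_prod mult_ac)
  finally have "to_fract (monic_prod k :: 'a poly) * (sum_inverse_monic k * to_fract (lcar k)) = to_fract (monic_prod k) * 1"
    by (rule sym)
  then have "sum_inverse_monic k * to_fract (lcar k :: 'a poly) = 1"
    using monic_prod_nonzero[where 'a = 'a, of k] by simp
  then show ?thesis
    using lcar_nonzero[where 'a = 'a, of k] by (simp add: eq_divide_eq)
qed


section \<open>The power sums of exponent \<open>q\<^sup>d - 2\<close>\<close>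

text \<open>\<open>b\<^sub>k\<^sub>+\<^sub>1(Y) / (Y - \<theta>)\<close> at \<open>Y = \<theta>\<^bsup>q\<^sup>d\<^esup>\<close>.\<close>
definition bcar_tail :: "nat \<Rightarrow> nat \<Rightarrow> 'a::{finite,field} poly" where
  "bcar_tail d k = (\<Prod>j\<in>{1..k}. theta ^ (CARD('a) ^ d) - theta ^ (CARD('a) ^ j))"

lemma bcar_Suc_eq_bcar_tail:
  "bcar d (Suc k) = (theta ^ (CARD('a) ^ d) - theta) * (bcar_tail d k :: 'a::{finite,field} poly)"
  unfolding bcar_def bcar_tail_def
  by (subst prod.lessThan_Suc_shift) (simp add: prod.atLeast1_atMost_eq del: prod.lessThan_Suc)

text \<open>Interpolate with the weights \<open>1/a\<^sup>2\<close>: at \<open>X = \<theta>\<close> this recovers Carlitz's sum \<open>1/l\<^sub>k\<close>,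
  which fixes the leading coefficient, and at \<open>X = \<theta>\<^bsup>q\<^sup>d\<^esup>\<close> it gives the power sum.\<close>
lemma to_fract_Spow_card_power_minus_2:
  assumes "d \<ge> 1"
  shows "to_fract (Spow k (CARD('a) ^ d - 2) :: 'a::{finite,field} poly)
           = to_fract (bcar_tail d k :: 'a poly) / to_fract (lcar k :: 'a poly) ^ 2"
proof -
  define c where "c = (\<Sum>a\<in>monic_polys k. 1 / to_fract a ^ 2 :: 'a poly fract)"
  have power_ge_2: "2 \<le> CARD('a) ^ j" if "j \<ge> 1" for j
    using card_ge_2[where 'a = 'a] self_le_power[of "CARD('a)" j] that by linarith
  have J: "2 \<le> CARD('a) ^ j \<and> CARD('a) ^ j + 2 \<le> CARD('a) ^ k + 2" if "j \<in> {1..k}" for j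
    using that power_ge_2 card_ge_2[where 'a = 'a] by (auto intro: power_increasing)
  have "sum_inverse_monic k = (\<Sum>a\<in>monic_polys k. poly (fract_poly a) (to_fract theta) / to_fract a ^ 2)"
    unfolding sum_inverse_monic_def poly_fract_poly
    by (intro sum.cong refl) (simp add: theta_def power2_eq_square monic_polys_nonzero)
  also have "\<dots> = c * (\<Prod>j\<in>{1..k}. to_fract theta - to_fract (theta ^ (CARD('a) ^ j)))"
    unfolding c_def by (rule sum_monic_polys_inverse_power_interpolation) (use J in auto)
  also have "\<dots> = c * to_fract (lcar k)"
    by (simp add: lcar_def del: to_fract_power)
  finally have "c = 1 / to_fract (lcar k :: 'a poly) ^ 2"
    using lcar_nonzero[where 'a = 'a, of k] by (simp add: sum_inverse_monic_eq field_simps power2_eq_square)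
  moreover have "to_fract (Spow k (CARD('a) ^ d - 2) :: 'a poly) = c * to_fract (bcar_tail d k :: 'a poly)"
    unfolding Spow_def c_def monic_polys_def[symmetric] bcar_tail_def
    by (rule to_fract_sum_monic_polys_power_eq) (use J power_ge_2 assms in auto)
  ultimately show ?thesis
    by simp
qed

lemma bcar_tail_eq_0: "1 \<le> d \<Longrightarrow> d \<le> k \<Longrightarrow> bcar_tail d k = (0 :: 'a::{finite,field} poly)"
  unfolding bcar_tail_def by (intro prod_zero) (auto intro!: bexI[of _ d])

lemma BG_card_power_minus_2_eq_sum:
  assumes "d \<ge> 1"
  shows "BG (CARD('a) ^ d - 2) = (\<Sum>k<d. Spow k (CARD('a) ^ d - 2) :: 'a::{finite,field} poly)"
  unfolding BG_def
proof (rule sum.mono_neutral_left)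
  have "Spow k (CARD('a) ^ d - 2) = (0 :: 'a poly)" if "d \<le> k" for k
    using to_fract_Spow_card_power_minus_2[where 'a = 'a, OF assms, of k] bcar_tail_eq_0[where 'a = 'a, OF assms that]
    by simp
  then show "{k. Spow k (CARD('a) ^ d - 2) \<noteq> (0 :: 'a poly)} \<subseteq> {..<d}"
    by (auto simp: not_less[symmetric])
qed auto

lemma bcar_tail_quotient_diff:
  "to_fract (bcar_tail d (Suc m)) / to_fract (lcar (Suc m)) - to_fract (bcar_tail d m) / to_fract (lcar m)
     = to_fract (bcar d (Suc m)) / to_fract (lcar (Suc m) :: 'a::{finite,field} poly)"
proof -
  define P T A L where "P = to_fract (bcar_tail d m :: 'a poly)" and "T = to_fract (theta ^ (CARD('a) ^ d) :: 'a poly)"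
    and "A = to_fract (theta ^ (CARD('a) ^ Suc m) :: 'a poly)" and "L = to_fract (lcar m :: 'a poly)"
  have "L \<noteq> 0" and "to_fract theta - A \<noteq> 0"
    using lcar_nonzero[where 'a = 'a, of "Suc m"] by (auto simp: L_def A_def lcar_Suc simp del: to_fract_power)
  have "bcar_tail d (Suc m) = bcar_tail d m * (theta ^ (CARD('a) ^ d) - theta ^ (CARD('a) ^ Suc m) :: 'a poly)"
    by (simp add: bcar_tail_def)
  then have "to_fract (bcar_tail d (Suc m)) / to_fract (lcar (Suc m)) - to_fract (bcar_tail d m) / to_fract (lcar m)
      = P * (T - A) / (L * (to_fract theta - A)) - P / L"
    by (simp add: P_def T_def A_def L_def lcar_Suc del: to_fract_power)
  also have "\<dots> = (T - to_fract theta) * P / (L * (to_fract theta - A))"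
    using \<open>L \<noteq> 0\<close> \<open>to_fract theta - A \<noteq> 0\<close> by (simp add: field_simps)
  also have "\<dots> = to_fract (bcar d (Suc m)) / to_fract (lcar (Suc m) :: 'a poly)"
    by (simp add: P_def T_def A_def L_def bcar_Suc_eq_bcar_tail lcar_Suc del: to_fract_power)
  finally show ?thesis .
qed

theorem theorem5p1:
  fixes d :: nat
  assumes "CARD('a::{finite,field}) > 2" and "d \<ge> 1"
  shows "Fract (BG (CARD('a) ^ d - 2) :: 'a poly) 1 =
    - (\<Sum>i\<in>{1..d}. \<Sum>j<i.
         Fract (bcar d i :: 'a poly) 1 / (Fract (lcar i :: 'a poly) 1 * Fract (lcar j :: 'a poly) 1))"
proof -
  define c where "c k = to_fract (bcar_tail d k :: 'a poly) / to_fract (lcar k :: 'a poly)" for k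
  have step: "c i - c (i - 1) = to_fract (bcar d i :: 'a poly) / to_fract (lcar i :: 'a poly)" if "i \<ge> 1" for i
    using that bcar_tail_quotient_diff[where 'a = 'a, of d "i - 1"] by (simp add: c_def)
  have "to_fract (BG (CARD('a) ^ d - 2) :: 'a poly) = (\<Sum>k<d. c k * (1 / to_fract (lcar k :: 'a poly)))"
    by (simp add: BG_card_power_minus_2_eq_sum[OF assms(2)] to_fract_Spow_card_power_minus_2[OF assms(2)]
        c_def power2_eq_square del: to_fract_power)
  also have "\<dots> = - (\<Sum>j<d. (c d - c j) * (1 / to_fract (lcar j :: 'a poly)))"
    using bcar_tail_eq_0[where 'a = 'a, OF assms(2) order.refl] by (simp add: c_def sum_negf[symmetric])
  also have "\<dots> = - (\<Sum>i\<in>{1..d}. \<Sum>j<i. (c i - c (i - 1)) * (1 / to_fract (lcar j :: 'a poly)))"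
    by (subst sum_telescope_nested) (rule refl)
  also have "\<dots> = - (\<Sum>i\<in>{1..d}. \<Sum>j<i.
                     to_fract (bcar d i :: 'a poly) / (to_fract (lcar i :: 'a poly) * to_fract (lcar j :: 'a poly)))"
    by (intro arg_cong[of _ _ uminus] sum.cong refl) (simp add: step[unfolded One_nat_def])
  finally show ?thesis
    by (simp add: to_fract_def)
qed

end
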